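(* $\mathfrak{b}_{\mathrm{game}}^{\mathrm{II}} = \mathfrak{d}$, where $\mathfrak{d}$ is the dominating number.
   Context: For $x,y\in\omega^\omega$, $x\le^* y$ means $x(n)\le y(n)$ for all but finitely many $n$. $\mathfrak{d}$ is the least size of a family $\mathcal{A}\subseteq\omega^\omega$ such that every $x\in\omega^\omega$ satisfies $x\le^* y$ for some $y\in\mathcal{A}$. For $\mathcal{A}\subseteq\omega^\omega$, the bounding game with respect to $\mathcal{A}$ is the infinite two-player game in which, at round $k$, Player I plays $n_k\in\omega$ and then Player II plays $i_k\in\{0,1\}$. Player II wins iff $i_k=1$ for infinitely many $k$ and there is $g\in\mathcal{A}$ with $\{k\in\omega: i_k=1\}=\{k\in\omega: n_k<g(k)\}$. $\mathfrak{b}_{\mathrm{game}}^{\mathrm{II}}$ is the least $|\mathcal{A}|$ such that Player II has a winning strategy in the bounding game with respect to $\mathcal{A}$. *)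

theory Defs
  imports Main
begin

definition le_star :: "(nat \<Rightarrow> nat) \<Rightarrow> (nat \<Rightarrow> nat) \<Rightarrow> bool" where
  "le_star x y \<longleftrightarrow> finite {n. \<not> x n \<le> y n}"

definition dominating :: "(nat \<Rightarrow> nat) set \<Rightarrow> bool" where
  "dominating \<A> \<longleftrightarrow> (\<forall>x. \<exists>y\<in>\<A>. le_star x y)"

text \<open>Strategies for Player II: a function of Player I's moves n_0,...,n_k so far
  (II's own earlier moves are determined by these), giving i_k (True = 1).\<close>
definition II_play :: "(nat list \<Rightarrow> bool) \<Rightarrow> (nat \<Rightarrow> nat) \<Rightarrow> nat \<Rightarrow> bool" where
  "II_play \<sigma> x k = \<sigma> (map x [0..<Suc k])"

definition II_winning_strategy :: "(nat \<Rightarrow> nat) set \<Rightarrow> (nat list \<Rightarrow> bool) \<Rightarrow> bool" where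
  "II_winning_strategy \<A> \<sigma> \<longleftrightarrow>
     (\<forall>x :: nat \<Rightarrow> nat. infinite {k. II_play \<sigma> x k} \<and>
        (\<exists>g\<in>\<A>. {k. II_play \<sigma> x k} = {k. x k < g k}))"

definition II_wins_bounding_game :: "(nat \<Rightarrow> nat) set \<Rightarrow> bool" where
  "II_wins_bounding_game \<A> \<longleftrightarrow> (\<exists>\<sigma>. II_winning_strategy \<A> \<sigma>)"

end

theory Submission
  imports Defs "HOL-Library.Infinite_Set"
begin

text \<open>
  From a dominating family \<open>D\<close> one gets a winning family of the same size: II answers 1
  exactly at even rounds, and the family consists of the functions that are \<open>max M (y k + 1)\<close>
  at even \<open>k\<close> and 0 at odd \<open>k\<close>, for \<open>y \<in> D\<close> and \<open>M \<in> \<nat>\<close>.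

  Conversely, let \<open>\<sigma>\<close> be a winning strategy for II.  Call \<open>n\<close> a zero threshold of a position
  \<open>q\<close> if \<open>\<sigma>\<close> answers 0 to every move \<open>\<ge> n\<close> at \<open>q\<close>.  Starting from any position, if I always
  plays the least zero threshold, then after finitely many rounds (the escape time) a position
  without zero threshold is reached, since otherwise II would answer 0 forever.  Given \<open>x\<close>,
  player I plays, at round \<open>k\<close>, the least move \<open>\<ge> max x[0..k]\<close> that II answers with 1, and the
  least zero threshold if there is none.  If \<open>g\<close> is the function witnessing II's win, the
  position after \<open>j\<close> rounds lies in a finite set determined by \<open>g\<close> (each move is below \<open>g\<close> or
  a least zero threshold), and before its escape time some move \<open>\<ge> x j\<close> is answered with 1,
  hence lies below \<open>g\<close>.  So \<open>x\<close> is bounded everywhere by a function computed from \<open>g\<close> alone.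
\<close>

section \<open>Dominating families give winning families\<close>

lemma dominating_infinite:
  assumes "dominating D"
  shows "infinite D"
proof
  assume fin: "finite D"
  define x where "x = (\<lambda>k. Max ((\<lambda>y. y k) ` D) + 1)"
  obtain y where y: "y \<in> D" "le_star x y"
    using assms unfolding dominating_def by blast
  have "y n < x n" for n
    using fin y(1) unfolding x_def by (simp add: le_imp_less_Suc)
  then have "{n. \<not> x n \<le> y n} = UNIV"
    by (auto simp: not_le)
  then show False
    using y(2) unfolding le_star_def by simp
qed

definition even_round_family :: "(nat \<Rightarrow> nat) set \<Rightarrow> (nat \<Rightarrow> nat) set" where
  "even_round_family D =
     (\<lambda>(y, M) k. if even k then max M (y k + 1) else 0) ` (D \<times> (UNIV :: nat set))"

lemma card_of_even_round_family:
  assumes "infinite D"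
  shows "(card_of (even_round_family D), card_of D) \<in> ordLeq"
proof -
  have "(card_of (even_round_family D), card_of (D \<times> (UNIV :: nat set))) \<in> ordLeq"
    unfolding even_round_family_def by (rule card_of_image)
  moreover have "(card_of (D \<times> (UNIV :: nat set)), card_of D) \<in> ordIso"
    using assms
    by (intro card_of_Times_infinite_simps(1)) (auto simp: infinite_iff_card_of_nat[symmetric])
  ultimately show ?thesis
    using ordLeq_ordIso_trans by blast
qed

lemma even_rounds_winning:
  assumes "dominating D"
  shows "II_winning_strategy (even_round_family D) (\<lambda>l. even (length l - 1))"
  unfolding II_winning_strategy_def
proof (intro allI conjI)
  fix x :: "nat \<Rightarrow> nat"
  have answers: "{k. II_play (\<lambda>l. even (length l - 1)) x k} = {k. even k}"
    unfolding II_play_def by simp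
  have "infinite {k :: nat. even k}"
    unfolding infinite_nat_iff_unbounded_le by (metis dvd_triv_left le_add2 mem_Collect_eq mult_2)
  then show "infinite {k. II_play (\<lambda>l. even (length l - 1)) x k}"
    unfolding answers .
  obtain y where y: "y \<in> D" "le_star x y"
    using assms unfolding dominating_def by blast
  define M where "M = Max (x ` {n. \<not> x n \<le> y n}) + 1"
  have "x n < M" if "\<not> x n \<le> y n" for n
    using y(2) that unfolding M_def le_star_def by (simp add: le_imp_less_Suc)
  then have "x n < max M (y n + 1)" for n
    by (cases "x n \<le> y n") (auto simp: less_max_iff_disj)
  then show "\<exists>g\<in>even_round_family D. {k. II_play (\<lambda>l. even (length l - 1)) x k} = {k. x k < g k}"
    using y(1) unfolding answers even_round_family_def
    by (intro bexI[of _ "\<lambda>k. if even k then max M (y k + 1) else 0"]) auto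
qed

theorem dominating_imp_II_wins_bounding_game:
  assumes "dominating D"
  shows "\<exists>\<A>. II_wins_bounding_game \<A> \<and> (card_of \<A>, card_of D) \<in> ordLeq"
  using even_rounds_winning[OF assms] card_of_even_round_family[OF dominating_infinite[OF assms]]
  unfolding II_wins_bounding_game_def by blast

section \<open>Winning strategies give dominating families\<close>

definition has_zero_threshold :: "(nat list \<Rightarrow> bool) \<Rightarrow> nat list \<Rightarrow> bool" where
  "has_zero_threshold \<sigma> q \<longleftrightarrow> (\<exists>n. \<forall>m\<ge>n. \<not> \<sigma> (q @ [m]))"

text \<open>Meaningful only when \<^const>\<open>has_zero_threshold\<close> holds; otherwise a junk value of \<open>LEAST\<close>.\<close>
definition zero_threshold :: "(nat list \<Rightarrow> bool) \<Rightarrow> nat list \<Rightarrow> nat" where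
  "zero_threshold \<sigma> q = (LEAST n. \<forall>m\<ge>n. \<not> \<sigma> (q @ [m]))"

lemma zero_threshold_answered_zero:
  assumes "has_zero_threshold \<sigma> q"
  shows "\<not> \<sigma> (q @ [zero_threshold \<sigma> q])"
proof -
  have "\<forall>m\<ge>zero_threshold \<sigma> q. \<not> \<sigma> (q @ [m])"
    using assms unfolding has_zero_threshold_def zero_threshold_def by (rule LeastI_ex)
  then show ?thesis
    by simp
qed

primrec threshold_run :: "(nat list \<Rightarrow> bool) \<Rightarrow> nat list \<Rightarrow> nat \<Rightarrow> nat list" where
  "threshold_run \<sigma> p 0 = p"
| "threshold_run \<sigma> p (Suc m) = threshold_run \<sigma> p m @ [zero_threshold \<sigma> (threshold_run \<sigma> p m)]"

lemma length_threshold_run [simp]: "length (threshold_run \<sigma> p m) = length p + m"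
  by (induction m) auto

lemma take_threshold_run:
  "m \<le> m' \<Longrightarrow> take (length p + m) (threshold_run \<sigma> p m') = threshold_run \<sigma> p m"
  by (induction m' rule: dec_induct) (auto simp: not_le)

lemma nth_threshold_run:
  assumes "i < length p + m" "i < length p + m'"
  shows "threshold_run \<sigma> p m ! i = threshold_run \<sigma> p m' ! i"
proof (cases "m \<le> m'")
  case True
  with assms(1) show ?thesis
    by (simp add: take_threshold_run[OF True, symmetric])
next
  case False
  with assms(2) show ?thesis
    by (simp add: take_threshold_run[of m' m, symmetric])
qed

lemma threshold_run_escapes:
  assumes "II_winning_strategy A \<sigma>"
  shows "\<exists>m. \<not> has_zero_threshold \<sigma> (threshold_run \<sigma> p m)"
proof (rule ccontr)
  assume "\<not> ?thesis"
  then have all: "has_zero_threshold \<sigma> (threshold_run \<sigma> p m)" for m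
    by blast
  define X where "X = (\<lambda>i. threshold_run \<sigma> p (Suc i) ! i)"
  have prefix_X: "map X [0..<Suc k] = threshold_run \<sigma> p (Suc (k - length p))"
    if "length p \<le> k" for k
  proof (rule nth_equalityI)
    fix i
    assume "i < length (map X [0..<Suc k])"
    then have "threshold_run \<sigma> p (Suc i) ! i = threshold_run \<sigma> p (Suc (k - length p)) ! i"
      using that by (intro nth_threshold_run) auto
    with \<open>i < length (map X [0..<Suc k])\<close> show "map X [0..<Suc k] ! i = threshold_run \<sigma> p (Suc (k - length p)) ! i"
      unfolding X_def by (simp del: upt_Suc)
  qed (use that in simp)
  have "infinite {k. II_play \<sigma> X k}"
    using assms unfolding II_winning_strategy_def by blast
  then obtain k where k: "II_play \<sigma> X k" "length p \<le> k"
    unfolding infinite_nat_iff_unbounded_le by blast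
  have "\<sigma> (threshold_run \<sigma> p (Suc (k - length p)))"
    using k(1) unfolding II_play_def prefix_X[OF k(2)] .
  then show False
    using zero_threshold_answered_zero[OF all] by simp
qed

definition escape_time :: "(nat list \<Rightarrow> bool) \<Rightarrow> nat list \<Rightarrow> nat" where
  "escape_time \<sigma> p = length p + (LEAST m. \<not> has_zero_threshold \<sigma> (threshold_run \<sigma> p m))"

definition chase_move :: "(nat list \<Rightarrow> bool) \<Rightarrow> (nat \<Rightarrow> nat) \<Rightarrow> nat list \<Rightarrow> nat" where
  "chase_move \<sigma> z q =
     (if \<exists>n\<ge>z (length q). \<sigma> (q @ [n]) then LEAST n. z (length q) \<le> n \<and> \<sigma> (q @ [n])
      else zero_threshold \<sigma> q)"

primrec chase :: "(nat list \<Rightarrow> bool) \<Rightarrow> (nat \<Rightarrow> nat) \<Rightarrow> nat \<Rightarrow> nat list" where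
  "chase \<sigma> z 0 = []"
| "chase \<sigma> z (Suc k) = chase \<sigma> z k @ [chase_move \<sigma> z (chase \<sigma> z k)]"

definition chase_play :: "(nat list \<Rightarrow> bool) \<Rightarrow> (nat \<Rightarrow> nat) \<Rightarrow> nat \<Rightarrow> nat" where
  "chase_play \<sigma> z k = chase_move \<sigma> z (chase \<sigma> z k)"

lemma map_chase_play: "map (chase_play \<sigma> z) [0..<k] = chase \<sigma> z k"
  by (induction k) (auto simp: chase_play_def)

lemma length_chase [simp]: "length (chase \<sigma> z k) = k"
  by (induction k) auto

lemma nth_chase: "k < j \<Longrightarrow> chase \<sigma> z j ! k = chase_play \<sigma> z k"
  using map_chase_play[of \<sigma> z j, symmetric] by simp

lemma take_chase: "k \<le> j \<Longrightarrow> take k (chase \<sigma> z j) = chase \<sigma> z k"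
  using map_chase_play[of \<sigma> z j, symmetric] map_chase_play[of \<sigma> z k]
  by (simp add: take_map min_def)

lemma chase_play_answered_one:
  assumes "\<exists>n\<ge>z k. \<sigma> (chase \<sigma> z k @ [n])"
  shows "z k \<le> chase_play \<sigma> z k \<and> \<sigma> (chase \<sigma> z (Suc k))"
proof -
  have "z k \<le> chase_play \<sigma> z k \<and> \<sigma> (chase \<sigma> z k @ [chase_play \<sigma> z k])"
    unfolding chase_play_def chase_move_def using assms by (simp, rule LeastI2_ex) auto
  then show ?thesis
    by (simp add: chase_play_def)
qed

lemma chase_play_zero_threshold:
  "\<not> (\<exists>n\<ge>z k. \<sigma> (chase \<sigma> z k @ [n])) \<Longrightarrow> chase_play \<sigma> z k = zero_threshold \<sigma> (chase \<sigma> z k)"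
  unfolding chase_play_def chase_move_def by auto

text \<open>The assumption on \<open>g\<close> says that \<open>g\<close> witnesses II's win in the chasing play.\<close>
lemma chase_hit_before_escape:
  assumes "II_winning_strategy A \<sigma>"
    and g: "\<And>k. \<sigma> (chase \<sigma> z (Suc k)) \<longleftrightarrow> chase_play \<sigma> z k < g k"
  shows "\<exists>k\<ge>j. k \<le> escape_time \<sigma> (chase \<sigma> z j) \<and> z k \<le> chase_play \<sigma> z k \<and> chase_play \<sigma> z k < g k"
proof -
  let ?p = "chase \<sigma> z j"
  define m0 where "m0 = (LEAST m. \<not> has_zero_threshold \<sigma> (threshold_run \<sigma> ?p m))"
  have escaped: "\<not> has_zero_threshold \<sigma> (threshold_run \<sigma> ?p m0)"
    unfolding m0_def using threshold_run_escapes[OF assms(1)] by (rule LeastI_ex)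
  define hit where "hit = (\<lambda>k. \<exists>n\<ge>z k. \<sigma> (chase \<sigma> z k @ [n]))"
  have "\<exists>k\<ge>j. k \<le> j + m0 \<and> hit k"
  proof (rule ccontr)
    assume no_hit: "\<not> ?thesis"
    have "m \<le> m0 \<Longrightarrow> chase \<sigma> z (j + m) = threshold_run \<sigma> ?p m" for m
    proof (induction m)
      case (Suc m)
      then have "\<not> hit (j + m)"
        using no_hit by auto
      with Suc show ?case
        using chase_play_zero_threshold[of z "j + m" \<sigma>]
        unfolding hit_def by (simp add: chase_play_def)
    qed simp
    then have "\<not> has_zero_threshold \<sigma> (chase \<sigma> z (j + m0))"
      using escaped by simp
    then have "hit (j + m0)"
      unfolding has_zero_threshold_def hit_def by (meson not_le_imp_less less_imp_le)
    with no_hit show False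
      by auto
  qed
  then obtain k where k: "j \<le> k" "k \<le> j + m0" "hit k"
    by blast
  with chase_play_answered_one[of z k \<sigma>] g[of k] show ?thesis
    unfolding hit_def escape_time_def m0_def by auto
qed

text \<open>The positions of length \<open>j\<close> that the chasing play can reach when II's answers are
  given by \<open>g\<close>.\<close>
definition threshold_positions :: "(nat list \<Rightarrow> bool) \<Rightarrow> (nat \<Rightarrow> nat) \<Rightarrow> nat \<Rightarrow> nat list set" where
  "threshold_positions \<sigma> g j =
     {p. length p = j \<and> (\<forall>k<j. p ! k < g k \<or> p ! k = zero_threshold \<sigma> (take k p))}"

lemma threshold_positions_Suc:
  "threshold_positions \<sigma> g (Suc j) \<subseteq>
     (\<lambda>(p, n). p @ [n]) ` (threshold_positions \<sigma> g j \<times> {..<g j})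
     \<union> (\<lambda>p. p @ [zero_threshold \<sigma> p]) ` threshold_positions \<sigma> g j"
proof
  fix p
  assume p: "p \<in> threshold_positions \<sigma> g (Suc j)"
  define q where "q = take j p"
  have p_eq: "p = q @ [p ! j]"
    using p unfolding q_def threshold_positions_def by (simp add: take_Suc_conv_app_nth[symmetric])
  have "q \<in> threshold_positions \<sigma> g j"
    using p unfolding q_def threshold_positions_def by auto
  moreover have "p ! j < g j \<or> p ! j = zero_threshold \<sigma> q"
    using p unfolding q_def threshold_positions_def by auto
  ultimately show "p \<in> (\<lambda>(p, n). p @ [n]) ` (threshold_positions \<sigma> g j \<times> {..<g j})
     \<union> (\<lambda>p. p @ [zero_threshold \<sigma> p]) ` threshold_positions \<sigma> g j"
  proof (elim disjE)
    assume "p ! j < g j"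
    with \<open>q \<in> threshold_positions \<sigma> g j\<close> show ?thesis
      by (subst p_eq, intro UnI1 image_eqI[of _ _ "(q, p ! j)"]) auto
  next
    assume "p ! j = zero_threshold \<sigma> q"
    with \<open>q \<in> threshold_positions \<sigma> g j\<close> show ?thesis
      by (subst p_eq, intro UnI2 image_eqI[of _ _ q]) auto
  qed
qed

lemma finite_threshold_positions: "finite (threshold_positions \<sigma> g j)"
proof (induction j)
  case 0
  have "threshold_positions \<sigma> g 0 = {[]}"
    unfolding threshold_positions_def by auto
  then show ?case
    by simp
next
  case (Suc j)
  then show ?case
    by (auto intro: finite_subset[OF threshold_positions_Suc])
qed

lemma chase_in_threshold_positions:
  assumes g: "\<And>k. \<sigma> (chase \<sigma> z (Suc k)) \<longleftrightarrow> chase_play \<sigma> z k < g k"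
  shows "chase \<sigma> z j \<in> threshold_positions \<sigma> g j"
proof -
  have "chase_play \<sigma> z i < g i \<or> chase_play \<sigma> z i = zero_threshold \<sigma> (chase \<sigma> z i)" for i
    using chase_play_answered_one[of z i \<sigma>] chase_play_zero_threshold[of z i \<sigma>] g[of i] by blast
  then show ?thesis
    unfolding threshold_positions_def by (simp add: nth_chase take_chase)
qed

definition dominating_bound :: "(nat list \<Rightarrow> bool) \<Rightarrow> (nat \<Rightarrow> nat) \<Rightarrow> nat \<Rightarrow> nat" where
  "dominating_bound \<sigma> g j = Max (g ` {j..Max (escape_time \<sigma> ` threshold_positions \<sigma> g j)})"

lemma le_dominating_bound:
  assumes W: "II_winning_strategy A \<sigma>"
    and g: "\<And>k. \<sigma> (chase \<sigma> z (Suc k)) \<longleftrightarrow> chase_play \<sigma> z k < g k"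
    and z: "z = (\<lambda>k. Max (x ` {..k}))"
  shows "x j \<le> dominating_bound \<sigma> g j"
proof -
  obtain k where k: "j \<le> k" "k \<le> escape_time \<sigma> (chase \<sigma> z j)"
    "z k \<le> chase_play \<sigma> z k" "chase_play \<sigma> z k < g k"
    using chase_hit_before_escape[OF W g] by blast
  have "x j \<le> z j"
    unfolding z by (intro Max_ge) auto
  also have "\<dots> \<le> z k"
    unfolding z using k(1) by (intro Max_mono) auto
  also have "\<dots> < g k"
    using k(3,4) by linarith
  also have "g k \<le> dominating_bound \<sigma> g j"
  proof -
    have "escape_time \<sigma> (chase \<sigma> z j) \<le> Max (escape_time \<sigma> ` threshold_positions \<sigma> g j)"
      using chase_in_threshold_positions[OF g] finite_threshold_positions by (intro Max_ge) auto
    with k show ?thesis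
      unfolding dominating_bound_def by (intro Max_ge) auto
  qed
  finally show ?thesis
    by simp
qed

theorem II_wins_bounding_game_imp_dominating:
  assumes "II_wins_bounding_game A"
  shows "\<exists>D. dominating D \<and> (card_of D, card_of A) \<in> ordLeq"
proof -
  obtain \<sigma> where W: "II_winning_strategy A \<sigma>"
    using assms unfolding II_wins_bounding_game_def by blast
  have "dominating (dominating_bound \<sigma> ` A)"
    unfolding dominating_def
  proof
    fix x :: "nat \<Rightarrow> nat"
    define z where "z = (\<lambda>k. Max (x ` {..k}))"
    obtain g where "g \<in> A" and g: "{k. II_play \<sigma> (chase_play \<sigma> z) k} = {k. chase_play \<sigma> z k < g k}"
      using W unfolding II_winning_strategy_def by blast
    have "\<sigma> (chase \<sigma> z (Suc k)) \<longleftrightarrow> chase_play \<sigma> z k < g k" for k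
      using g unfolding II_play_def map_chase_play by blast
    then have "le_star x (dominating_bound \<sigma> g)"
      using le_dominating_bound[OF W _ z_def] unfolding le_star_def by (simp add: not_le)
    with \<open>g \<in> A\<close> show "\<exists>y\<in>dominating_bound \<sigma> ` A. le_star x y"
      by blast
  qed
  moreover have "(card_of (dominating_bound \<sigma> ` A), card_of A) \<in> ordLeq"
    by (rule card_of_image)
  ultimately show ?thesis
    by blast
qed

theorem mainTheorem2:
  shows "(\<forall>\<A>. II_wins_bounding_game \<A> \<longrightarrow> (\<exists>\<D>. dominating \<D> \<and> (card_of \<D>, card_of \<A>) \<in> ordLeq))
       \<and> (\<forall>\<D>. dominating \<D> \<longrightarrow> (\<exists>\<A>. II_wins_bounding_game \<A> \<and> (card_of \<A>, card_of \<D>) \<in> ordLeq))"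
  using II_wins_bounding_game_imp_dominating dominating_imp_II_wins_bounding_game by blast

end
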